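(* Let $N\ge 2$ and $M\ge 1$ be integers and consider the indirect control system described in the context, with real Lie algebra $\mathcal{L}$ generated by $iH_0$ and $iH_x^j=i(1_S\otimes\sigma_x^j)$, $iH_y^j=i(1_S\otimes\sigma_y^j)$, $j=1,\dots,M$. If $i(1_S\otimes\sigma_x^j\sigma_x^{j+1})\in\mathcal{L}$ for every $j=1,2,\dots,M-1$, then $i(1_S\otimes\sigma_{[\alpha]})\in\mathcal{L}$ for every $[\alpha]=(\alpha_1,\dots,\alpha_M)\in\{x,y,z,0\}^M$ with $[\alpha]\neq(0,0,\dots,0)$.
   Context: The controlled system is $\mathbb{C}^N$ with orthonormal basis $|1\rangle,\dots,|N\rangle$; $e_{jk}=|j\rangle\langle k|$. $H_S=\sum_{j=1}^N E_j e_{jj}$ with real $E_j$, $\sum_j E_j=0$. For $1\le j<k\le N$: $x_{jk}=e_{jk}+e_{kj}$, $y_{jk}=i(e_{jk}-e_{kj})$, $h_j=e_{jj}-e_{j+1,j+1}$; $x_j=x_{j,j+1}$, $y_j=y_{j,j+1}$; $s_j^{(1)}=x_j$, $s_j^{(2)}=y_j$. The accessor is $(\mathbb{C}^2)^{\otimes M}$ ($M$ qubits); $\sigma_\alpha^j=1\otimes\cdots\otimes\sigma_\alpha\otimes\cdots\otimes 1$ is the Pauli matrix $\sigma_\alpha$ ($\alpha=x,y,z$) acting on the $j$-th qubit, $\sigma_0=1$, and for $[\alpha]\in\{x,y,z,0\}^M$, $\sigma_{[\alpha]}=\prod_{j=1}^M\sigma^j_{\alpha_j}$. $1_S,1_A$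 denote identities. $H_A=\sum_{j=1}^M\hbar\omega_j\sigma_z^j+\sum_{j=1}^{M-1}c_j\sigma_x^j\sigma_x^{j+1}$ (real $\omega_j,c_j$); $H_S'=\sum_{j=1}^{N-1}d_j x_j\otimes 1_A$ (real $d_j$); $H_{SA}=\sum_{j=1}^{N-1}\sum_{k=1}^2\sum_{[\alpha]\in\{x,y\}^M} g^{j(k)}_{[\alpha]}\, s_j^{(k)}\otimes\sigma_{[\alpha]}$ (real coefficients); $H_0=H_S\otimes 1_A+H_S'+1_S\otimes H_A+H_{SA}$. *)

theory Defs
  imports "Jordan_Normal_Form.Matrix"
begin

definition kron :: "complex mat \<Rightarrow> complex mat \<Rightarrow> complex mat" where
  "kron A B = mat (dim_row A * dim_row B) (dim_col A * dim_col B)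
     (\<lambda>(i,j). A $$ (i div dim_row B, j div dim_col B) * B $$ (i mod dim_row B, j mod dim_col B))"

definition msum :: "nat \<Rightarrow> ('a \<Rightarrow> complex mat) \<Rightarrow> 'a set \<Rightarrow> complex mat" where
  "msum d f A = mat d d (\<lambda>ij. \<Sum>a\<in>A. f a $$ ij)"

datatype pauli = P0 | PX | PY | PZ

definition pmat :: "pauli \<Rightarrow> complex mat" where
  "pmat a = (case a of
      P0 \<Rightarrow> mat_of_rows_list 2 [[1,0],[0,1]]
    | PX \<Rightarrow> mat_of_rows_list 2 [[0,1],[1,0]]
    | PY \<Rightarrow> mat_of_rows_list 2 [[0,-\<i>],[\<i>,0]]
    | PZ \<Rightarrow> mat_of_rows_list 2 [[1,0],[0,-1]])"

(* sigma_[alpha] for alpha = [alpha_1,...,alpha_M]; first list entry acts on qubit 1 *)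
definition pstr :: "pauli list \<Rightarrow> complex mat" where
  "pstr as = foldr (\<lambda>a acc. kron (pmat a) acc) as (1\<^sub>m 1)"

(* sigma_alpha^j on M qubits, j in {1..M} *)
definition sig :: "nat \<Rightarrow> nat \<Rightarrow> pauli \<Rightarrow> complex mat" where
  "sig M j a = pstr (map (\<lambda>k. if k = j then a else P0) [1..<M+1])"

(* e_{jk} = |j><k| on C^N, 1-based indices *)
definition ee :: "nat \<Rightarrow> nat \<Rightarrow> nat \<Rightarrow> complex mat" where
  "ee N j k = mat N N (\<lambda>(r,c). if r = j - 1 \<and> c = k - 1 then 1 else 0)"

definition xj :: "nat \<Rightarrow> nat \<Rightarrow> complex mat" where
  "xj N j = ee N j (j+1) + ee N (j+1) j"

definition yj :: "nat \<Rightarrow> nat \<Rightarrow> complex mat" where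
  "yj N j = \<i> \<cdot>\<^sub>m (ee N j (j+1) - ee N (j+1) j)"

definition sj :: "nat \<Rightarrow> nat \<Rightarrow> nat \<Rightarrow> complex mat" where
  "sj N j k = (if k = 1 then xj N j else yj N j)"

inductive_set lie_gen :: "complex mat set \<Rightarrow> complex mat set" for S where
  gen: "A \<in> S \<Longrightarrow> A \<in> lie_gen S"
| add: "A \<in> lie_gen S \<Longrightarrow> B \<in> lie_gen S \<Longrightarrow> A + B \<in> lie_gen S"
| smult: "A \<in> lie_gen S \<Longrightarrow> complex_of_real r \<cdot>\<^sub>m A \<in> lie_gen S"
| comm: "A \<in> lie_gen S \<Longrightarrow> B \<in> lie_gen S \<Longrightarrow> A * B - B * A \<in> lie_gen S"

definition H0 :: "nat \<Rightarrow> nat \<Rightarrow> (nat \<Rightarrow> real) \<Rightarrow> (nat \<Rightarrow> real) \<Rightarrow> (nat \<Rightarrow> real)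
    \<Rightarrow> (nat \<Rightarrow> real) \<Rightarrow> (nat \<Rightarrow> nat \<Rightarrow> pauli list \<Rightarrow> real) \<Rightarrow> real \<Rightarrow> complex mat" where
  "H0 N M E \<omega> c d g hbar =
     (let D = N * 2 ^ M; IS = 1\<^sub>m N; IA = 1\<^sub>m (2 ^ M) in
       kron (msum N (\<lambda>j. complex_of_real (E j) \<cdot>\<^sub>m ee N j j) {1..N}) IA
     + msum D (\<lambda>j. complex_of_real (d j) \<cdot>\<^sub>m kron (xj N j) IA) {1..N-1}
     + kron IS (msum (2 ^ M) (\<lambda>j. complex_of_real (hbar * \<omega> j) \<cdot>\<^sub>m sig M j PZ) {1..M}
              + msum (2 ^ M) (\<lambda>j. complex_of_real (c j) \<cdot>\<^sub>m (sig M j PX * sig M (j+1) PX)) {1..M-1})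
     + msum D (\<lambda>(j,k,as). complex_of_real (g j k as) \<cdot>\<^sub>m kron (sj N j k) (pstr as))
         ({1..N-1} \<times> {1,2} \<times> {as. length as = M \<and> set as \<subseteq> {PX, PY}}))"

end

theory Submission
  imports Defs
begin

(* Pauli strings multiply sitewise up to a phase, sigma_w sigma_v = c sigma_(wv), and c is
   imaginary exactly when sigma_w and sigma_v anticommute. Then the commutator
   [i sigma_w, i sigma_v] is a nonzero real multiple of i sigma_(wv), so the strings w with
   i (1_S (x) sigma_w) in L are closed under anticommuting products. Multiplying by
   single-site and adjacent two-site strings, which are all obtained from X_k, Y_k and
   X_k X_(k+1), changes a nonzero site to any nonzero value, extends a string into a zero
   neighbour, and moves its last site one step to the right; induction on the position of
   the last nonzero site then reaches every nonzero string. *)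

section \<open>Kronecker products\<close>

lemma sum_lessThan_mult:
  fixes f :: "nat \<Rightarrow> 'a::comm_monoid_add"
  shows "sum f {..<a * b} = (\<Sum>i<a. \<Sum>j<b. f (i * b + j))"
proof -
  have "sum f {i * b..<i * b + b} = (\<Sum>j<b. f (i * b + j))" for i
    using sum.shift_bounds_nat_ivl[of f 0 "i * b" b] by (simp add: atLeast0LessThan add.commute)
  then show ?thesis
    using sum.nat_group[of f b a] by simp
qed

lemma smult_smult_mat: "a \<cdot>\<^sub>m (b \<cdot>\<^sub>m A) = (a * b :: 'a :: semigroup_mult) \<cdot>\<^sub>m A"
  by (rule eq_matI) (auto simp: mult.assoc)

lemma one_smult_mat [simp]: "(1 :: 'a :: monoid_mult) \<cdot>\<^sub>m A = A"
  by (rule eq_matI) auto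

lemma kron_index:
  "i < dim_row A * dim_row B \<Longrightarrow> j < dim_col A * dim_col B \<Longrightarrow>
   kron A B $$ (i, j) = A $$ (i div dim_row B, j div dim_col B) * B $$ (i mod dim_row B, j mod dim_col B)"
  by (simp add: kron_def)

lemma kron_dims [simp]:
  "dim_row (kron A B) = dim_row A * dim_row B" "dim_col (kron A B) = dim_col A * dim_col B"
  by (simp_all add: kron_def)

lemma kron_mult:
  assumes A: "A \<in> carrier_mat ra ca" and B: "B \<in> carrier_mat rb cb"
    and C: "C \<in> carrier_mat ca cc" and D: "D \<in> carrier_mat cb cd"
    and pos: "rb > 0" "cb > 0" "cd > 0"
  shows "kron A B * kron C D = kron (A * C) (B * D)"
proof (rule eq_matI)
  fix i j assume "i < dim_row (kron (A * C) (B * D))" "j < dim_col (kron (A * C) (B * D))"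
  then have i: "i < ra * rb" and j: "j < cc * cd"
    using A B C D by auto
  have entry: "kron A B $$ (i, k1 * cb + k2) * kron C D $$ (k1 * cb + k2, j)
      = (A $$ (i div rb, k1) * C $$ (k1, j div cd)) * (B $$ (i mod rb, k2) * D $$ (k2, j mod cd))"
    if "k1 < ca" "k2 < cb" for k1 k2
  proof -
    have "k1 * cb + k2 < Suc k1 * cb"
      using that by simp
    also have "\<dots> \<le> ca * cb"
      using that by (intro mult_le_mono1) simp
    finally show ?thesis
      using A B C D i j that by (simp add: kron_index)
  qed
  have "(kron A B * kron C D) $$ (i, j) = (\<Sum>k<ca * cb. kron A B $$ (i, k) * kron C D $$ (k, j))"
    using A B C D i j by (simp add: scalar_prod_def atLeast0LessThan)
  also have "\<dots> = (\<Sum>k1<ca. A $$ (i div rb, k1) * C $$ (k1, j div cd))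
                 * (\<Sum>k2<cb. B $$ (i mod rb, k2) * D $$ (k2, j mod cd))"
    by (simp add: sum_lessThan_mult entry sum_product)
  also have "\<dots> = kron (A * C) (B * D) $$ (i, j)"
    using A B C D i j pos
    by (simp add: kron_index scalar_prod_def atLeast0LessThan less_mult_imp_div_less)
  finally show "(kron A B * kron C D) $$ (i, j) = kron (A * C) (B * D) $$ (i, j)" .
qed (use A B C D in auto)

lemma kron_smult_left: "dim_row B > 0 \<Longrightarrow> dim_col B > 0 \<Longrightarrow> kron (c \<cdot>\<^sub>m A) B = c \<cdot>\<^sub>m kron A B"
  by (rule eq_matI) (auto simp: kron_def less_mult_imp_div_less)

lemma kron_smult_right: "dim_row B > 0 \<Longrightarrow> dim_col B > 0 \<Longrightarrow> kron A (c \<cdot>\<^sub>m B) = c \<cdot>\<^sub>m kron A B"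
  by (rule eq_matI) (auto simp: kron_def less_mult_imp_div_less)

section \<open>Products of Pauli matrices and Pauli strings\<close>

fun pauli_mult :: "pauli \<Rightarrow> pauli \<Rightarrow> pauli" where
  "pauli_mult P0 b = b"
| "pauli_mult a P0 = a"
| "pauli_mult PX PX = P0" | "pauli_mult PY PY = P0" | "pauli_mult PZ PZ = P0"
| "pauli_mult PX PY = PZ" | "pauli_mult PY PX = PZ"
| "pauli_mult PY PZ = PX" | "pauli_mult PZ PY = PX"
| "pauli_mult PZ PX = PY" | "pauli_mult PX PZ = PY"

fun pauli_phase :: "pauli \<Rightarrow> pauli \<Rightarrow> complex" where
  "pauli_phase PX PY = \<i>" | "pauli_phase PY PZ = \<i>" | "pauli_phase PZ PX = \<i>"
| "pauli_phase PY PX = - \<i>" | "pauli_phase PZ PY = - \<i>" | "pauli_phase PX PZ = - \<i>"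
| "pauli_phase _ _ = 1"

lemma pmat_carrier [simp]: "pmat a \<in> carrier_mat 2 2"
  by (cases a) (auto simp: pmat_def mat_of_rows_list_def)

lemma pmat_mult: "pmat a * pmat b = pauli_phase a b \<cdot>\<^sub>m pmat (pauli_mult a b)"
  by (rule eq_matI; cases a; cases b;
      auto simp: pmat_def mat_of_rows_list_def scalar_prod_def numeral_2_eq_2 less_Suc_eq)

lemma pauli_mult_commute: "pauli_mult b a = pauli_mult a b"
  by (cases a; cases b) auto

lemma pauli_phase_swap: "pauli_phase b a = cnj (pauli_phase a b)"
  by (cases a; cases b) auto

lemma pauli_mult_cancel_left [simp]: "pauli_mult a (pauli_mult a b) = b"
  by (cases a; cases b) auto

lemma pauli_mult_self [simp]: "pauli_mult a a = P0"
  by (cases a) auto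

lemma pauli_mult_eq_P0_iff [simp]: "pauli_mult a b = P0 \<longleftrightarrow> a = b"
  by (cases a; cases b) auto

lemma pauli_mult_eq_left_iff [simp]: "pauli_mult a b = a \<longleftrightarrow> b = P0"
  by (cases a; cases b) auto

lemma pauli_phase_self [simp]: "pauli_phase a a = 1"
  by (cases a) auto

lemma Im_pauli_phase_eq_0_iff: "Im (pauli_phase a b) = 0 \<longleftrightarrow> a = P0 \<or> b = P0 \<or> a = b"
  by (cases a; cases b) auto

lemma ex_nonzero_pauli_neq: "\<exists>c. c \<noteq> P0 \<and> c \<noteq> a"
  by (cases a) auto

definition pauli_str_mult :: "pauli list \<Rightarrow> pauli list \<Rightarrow> pauli list" where
  "pauli_str_mult w v = map2 pauli_mult w v"

definition pauli_str_phase :: "pauli list \<Rightarrow> pauli list \<Rightarrow> complex" where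
  "pauli_str_phase w v = prod_list (map2 pauli_phase w v)"

lemma length_pauli_str_mult [simp]: "length (pauli_str_mult w v) = min (length w) (length v)"
  by (simp add: pauli_str_mult_def)

lemma pauli_str_mult_Cons [simp]:
  "pauli_str_mult (a # w) (b # v) = pauli_mult a b # pauli_str_mult w v"
  by (simp add: pauli_str_mult_def)

lemma pauli_str_phase_Cons [simp]:
  "pauli_str_phase (a # w) (b # v) = pauli_phase a b * pauli_str_phase w v"
  by (simp add: pauli_str_phase_def)

lemma pauli_str_mult_commute: "pauli_str_mult v w = pauli_str_mult w v"
proof (induction w arbitrary: v)
  case (Cons a w)
  then show ?case by (cases v) (auto simp: pauli_str_mult_def pauli_mult_commute)
qed (simp add: pauli_str_mult_def)

lemma pauli_str_phase_swap: "pauli_str_phase v w = cnj (pauli_str_phase w v)"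
proof (induction w arbitrary: v)
  case (Cons a w)
  then show ?case by (cases v) (auto simp: pauli_phase_swap[of _ a] pauli_str_phase_def)
qed (simp add: pauli_str_phase_def)

lemma pstr_Cons: "pstr (a # w) = kron (pmat a) (pstr w)"
  by (simp add: pstr_def)

lemma pstr_carrier: "pstr w \<in> carrier_mat (2 ^ length w) (2 ^ length w)"
  by (induction w) (auto simp: pstr_def pmat_carrier[THEN carrier_matD(1)] pmat_carrier[THEN carrier_matD(2)])

lemma pstr_mult:
  "length w = length v \<Longrightarrow> pstr w * pstr v = pauli_str_phase w v \<cdot>\<^sub>m pstr (pauli_str_mult w v)"
proof (induction w arbitrary: v)
  case Nil
  then show ?case by (auto simp: pstr_def pauli_str_phase_def pauli_str_mult_def)
next
  case (Cons a w)
  then obtain b v' where v: "v = b # v'" and len: "length w = length v'"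
    by (cases v) auto
  have "pstr (a # w) * pstr v = kron (pmat a * pmat b) (pstr w * pstr v')"
    unfolding v pstr_Cons
    by (rule kron_mult[where ra = 2 and ca = 2 and cc = 2 and cb = "2 ^ length w" and cd = "2 ^ length w"])
      (use pstr_carrier[of w] pstr_carrier[of v'] len in auto)
  also have "\<dots> = pauli_str_phase (a # w) v \<cdot>\<^sub>m pstr (pauli_str_mult (a # w) v)"
    using Cons.IH[OF len] pstr_carrier[of w] pstr_carrier[of "pauli_str_mult w v'"] len
    by (simp add: v pmat_mult pstr_Cons kron_smult_left kron_smult_right smult_smult_mat mult.commute)
  finally show ?case .
qed

lemma pauli_str_mult_replicate_P0: "length w = n \<Longrightarrow> pauli_str_mult w (replicate n P0) = w"
  by (induction w arbitrary: n) (auto simp: pauli_str_mult_def)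

lemma pauli_str_phase_replicate_P0: "length w = n \<Longrightarrow> pauli_str_phase w (replicate n P0) = 1"
  by (induction w arbitrary: n) (auto simp: pauli_str_phase_def)

lemma pauli_str_mult_update:
  "length w = length v \<Longrightarrow> k < length v \<Longrightarrow>
   pauli_str_mult w (v[k := b]) = (pauli_str_mult w v)[k := pauli_mult (w ! k) b]"
  by (rule nth_equalityI) (auto simp: pauli_str_mult_def nth_list_update)

lemma pauli_str_phase_update:
  "length w = length v \<Longrightarrow> k < length v \<Longrightarrow> v ! k = P0 \<Longrightarrow>
   pauli_str_phase w (v[k := b]) = pauli_str_phase w v * pauli_phase (w ! k) b"
proof (induction w arbitrary: v k)
  case (Cons a w)
  then obtain c v' where v: "v = c # v'"
    by (cases v) auto
  show ?case
    using Cons.prems Cons.IH[of v' "k - 1"] by (cases k) (auto simp: v)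
qed simp

definition single_site :: "nat \<Rightarrow> nat \<Rightarrow> pauli \<Rightarrow> pauli list" where
  "single_site M k a = (replicate M P0)[k := a]"

definition adjacent_pair :: "nat \<Rightarrow> nat \<Rightarrow> pauli \<Rightarrow> pauli \<Rightarrow> pauli list" where
  "adjacent_pair M k a b = (single_site M k a)[Suc k := b]"

lemma length_single_site [simp]: "length (single_site M k a) = M"
  by (simp add: single_site_def)

lemma nth_single_site [simp]: "i < M \<Longrightarrow> single_site M k a ! i = (if i = k then a else P0)"
  by (simp add: single_site_def nth_list_update)

lemma length_adjacent_pair [simp]: "length (adjacent_pair M k a b) = M"
  by (simp add: adjacent_pair_def)

lemma pauli_str_mult_single_site:
  "length w = M \<Longrightarrow> k < M \<Longrightarrow> pauli_str_mult w (single_site M k a) = w[k := pauli_mult (w ! k) a]"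
  by (simp add: single_site_def pauli_str_mult_update pauli_str_mult_replicate_P0)

lemma pauli_str_phase_single_site:
  "length w = M \<Longrightarrow> k < M \<Longrightarrow> pauli_str_phase w (single_site M k a) = pauli_phase (w ! k) a"
  by (simp add: single_site_def pauli_str_phase_update pauli_str_phase_replicate_P0)

lemma pauli_str_mult_adjacent_pair:
  "length w = M \<Longrightarrow> Suc k < M \<Longrightarrow> pauli_str_mult w (adjacent_pair M k a b)
     = w[k := pauli_mult (w ! k) a, Suc k := pauli_mult (w ! Suc k) b]"
  by (simp add: adjacent_pair_def pauli_str_mult_update pauli_str_mult_single_site)

lemma pauli_str_phase_adjacent_pair:
  "length w = M \<Longrightarrow> Suc k < M \<Longrightarrow> pauli_str_phase w (adjacent_pair M k a b)
     = pauli_phase (w ! k) a * pauli_phase (w ! Suc k) b"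
  by (simp add: adjacent_pair_def pauli_str_phase_update pauli_str_phase_single_site)

section \<open>Strings reachable by anticommuting products\<close>

lemma lie_gen_imag_commutator:
  assumes A: "A \<in> carrier_mat n n" and B: "B \<in> carrier_mat n n"
    and AB: "A * B = z \<cdot>\<^sub>m C" and BA: "B * A = cnj z \<cdot>\<^sub>m C" and z: "Im z \<noteq> 0"
    and "\<i> \<cdot>\<^sub>m A \<in> lie_gen S" "\<i> \<cdot>\<^sub>m B \<in> lie_gen S"
  shows "\<i> \<cdot>\<^sub>m C \<in> lie_gen S"
proof -
  have C: "C \<in> carrier_mat n n"
    using arg_cong[OF AB, of dim_row] arg_cong[OF AB, of dim_col] A B by auto
  have "(\<i> \<cdot>\<^sub>m A) * (\<i> \<cdot>\<^sub>m B) = (- z) \<cdot>\<^sub>m C"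
    using mult_smult_assoc_mat[OF A smult_carrier_mat[OF B]] mult_smult_distrib[OF A B]
    by (simp add: smult_smult_mat AB)
  moreover have "(\<i> \<cdot>\<^sub>m B) * (\<i> \<cdot>\<^sub>m A) = (- cnj z) \<cdot>\<^sub>m C"
    using mult_smult_assoc_mat[OF B smult_carrier_mat[OF A]] mult_smult_distrib[OF B A]
    by (simp add: smult_smult_mat BA)
  ultimately have "(\<i> \<cdot>\<^sub>m A) * (\<i> \<cdot>\<^sub>m B) - (\<i> \<cdot>\<^sub>m B) * (\<i> \<cdot>\<^sub>m A) = (cnj z - z) \<cdot>\<^sub>m C"
    using C by (auto intro!: eq_matI simp: algebra_simps)
  also have "cnj z - z = complex_of_real (- 2 * Im z) * \<i>"
    by (simp add: complex_eq_iff)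
  finally have scaled: "\<i> \<cdot>\<^sub>m C = complex_of_real (- 1 / (2 * Im z)) \<cdot>\<^sub>m
      ((\<i> \<cdot>\<^sub>m A) * (\<i> \<cdot>\<^sub>m B) - (\<i> \<cdot>\<^sub>m B) * (\<i> \<cdot>\<^sub>m A))"
    using z by (simp add: smult_smult_mat field_simps)
  show ?thesis
    unfolding scaled by (intro lie_gen.smult lie_gen.comm assms(6,7))
qed

lemma kron_id_pstr_mult:
  assumes "length w = length v"
  shows "kron (1\<^sub>m N) (pstr w) * kron (1\<^sub>m N) (pstr v)
    = pauli_str_phase w v \<cdot>\<^sub>m kron (1\<^sub>m N) (pstr (pauli_str_mult w v))"
proof -
  have "kron (1\<^sub>m N) (pstr w) * kron (1\<^sub>m N) (pstr v) = kron (1\<^sub>m N * 1\<^sub>m N) (pstr w * pstr v)"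
    by (rule kron_mult[where ca = N and cb = "2 ^ length w" and cd = "2 ^ length w"])
      (use pstr_carrier[of w] pstr_carrier[of v] assms in auto)
  then show ?thesis
    using pstr_carrier[of "pauli_str_mult w v"] assms by (simp add: pstr_mult kron_smult_right)
qed

lemma lie_gen_kron_pstr_anticommuting:
  assumes "\<i> \<cdot>\<^sub>m kron (1\<^sub>m N) (pstr w) \<in> lie_gen S" "\<i> \<cdot>\<^sub>m kron (1\<^sub>m N) (pstr v) \<in> lie_gen S"
    and "length w = length v" and "Im (pauli_str_phase w v) \<noteq> 0"
  shows "\<i> \<cdot>\<^sub>m kron (1\<^sub>m N) (pstr (pauli_str_mult w v)) \<in> lie_gen S"
proof (rule lie_gen_imag_commutator)
  show "kron (1\<^sub>m N) (pstr w) * kron (1\<^sub>m N) (pstr v)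
      = pauli_str_phase w v \<cdot>\<^sub>m kron (1\<^sub>m N) (pstr (pauli_str_mult w v))"
    using assms(3) by (rule kron_id_pstr_mult)
  show "kron (1\<^sub>m N) (pstr v) * kron (1\<^sub>m N) (pstr w)
      = cnj (pauli_str_phase w v) \<cdot>\<^sub>m kron (1\<^sub>m N) (pstr (pauli_str_mult w v))"
    using kron_id_pstr_mult[of v w N] assms(3)
    by (simp add: pauli_str_phase_swap[of v] pauli_str_mult_commute[of v])
qed (use assms pstr_carrier[of w] pstr_carrier[of v] in auto)

(* Im (pauli_str_phase w v) \<noteq> 0 says that the strings w and v anticommute. *)
locale anticommuting_closed =
  fixes M :: nat and R :: "pauli list set"
  assumes length_mem: "w \<in> R \<Longrightarrow> length w = M"
    and mult_mem: "w \<in> R \<Longrightarrow> v \<in> R \<Longrightarrow> Im (pauli_str_phase w v) \<noteq> 0 \<Longrightarrow> pauli_str_mult w v \<in> R"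
    and X_mem: "k < M \<Longrightarrow> single_site M k PX \<in> R"
    and Y_mem: "k < M \<Longrightarrow> single_site M k PY \<in> R"
    and XX_mem: "Suc k < M \<Longrightarrow> adjacent_pair M k PX PX \<in> R"
begin

lemma mult_single_site_mem:
  assumes "w \<in> R" "k < M" "single_site M k a \<in> R" "Im (pauli_phase (w ! k) a) \<noteq> 0"
  shows "w[k := pauli_mult (w ! k) a] \<in> R"
  using mult_mem[OF assms(1,3)] assms length_mem[OF assms(1)]
  by (simp add: pauli_str_mult_single_site pauli_str_phase_single_site)

lemma mult_adjacent_pair_mem:
  assumes "w \<in> R" "Suc k < M" "adjacent_pair M k a b \<in> R"
    and "Im (pauli_phase (w ! k) a * pauli_phase (w ! Suc k) b) \<noteq> 0"
  shows "w[k := pauli_mult (w ! k) a, Suc k := pauli_mult (w ! Suc k) b] \<in> R"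
  using mult_mem[OF assms(1,3)] assms length_mem[OF assms(1)]
  by (simp add: pauli_str_mult_adjacent_pair pauli_str_phase_adjacent_pair)

lemma single_site_mem:
  assumes "k < M" "a \<noteq> P0"
  shows "single_site M k a \<in> R"
proof -
  have "(single_site M k PX)[k := PZ] \<in> R"
    using mult_single_site_mem[OF X_mem[OF assms(1)] assms(1) Y_mem[OF assms(1)]] assms(1) by simp
  then have "single_site M k PZ \<in> R"
    by (simp add: single_site_def)
  then show ?thesis
    using assms X_mem Y_mem by (cases a) auto
qed

lemma update_mem:
  assumes w: "w \<in> R" and k: "k < M" and "w ! k \<noteq> P0" "b \<noteq> P0"
  shows "w[k := b] \<in> R"
proof (cases "b = w ! k")
  case False
  let ?c = "pauli_mult (w ! k) b"
  have "w ! k \<noteq> ?c"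
    using \<open>b \<noteq> P0\<close> pauli_mult_eq_left_iff by metis
  then have "Im (pauli_phase (w ! k) ?c) \<noteq> 0"
    using assms False by (simp add: Im_pauli_phase_eq_0_iff)
  moreover have "single_site M k ?c \<in> R"
    using single_site_mem[OF k] False by simp
  ultimately show ?thesis
    using mult_single_site_mem[OF w k, of ?c] by simp
qed (use w in simp)

lemma adjacent_pair_mem:
  assumes k: "Suc k < M" and "a \<noteq> P0" "b \<noteq> P0"
  shows "adjacent_pair M k a b \<in> R"
proof -
  have "(adjacent_pair M k PX PX)[k := a] \<in> R"
    using update_mem[OF XX_mem[OF k]] assms by (simp add: adjacent_pair_def)
  then have "(adjacent_pair M k PX PX)[k := a, Suc k := b] \<in> R"
    using update_mem[of _ "Suc k" b] assms by (simp add: adjacent_pair_def)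
  then show ?thesis
    by (simp add: adjacent_pair_def single_site_def list_update_swap)
qed

lemma extend_mem:
  assumes w: "w \<in> R" and k: "Suc k < M" and wk: "w ! k \<noteq> P0" and "w ! Suc k = P0" and b: "b \<noteq> P0"
  shows "w[Suc k := b] \<in> R"
proof -
  obtain c where c: "c \<noteq> P0" "c \<noteq> w ! k"
    using ex_nonzero_pauli_neq by blast
  have "w[k := pauli_mult (w ! k) c, Suc k := b] \<in> R"
    using mult_adjacent_pair_mem[OF w k adjacent_pair_mem[OF k c(1) b]] assms c
    by (simp add: Im_pauli_phase_eq_0_iff)
  then have "w[k := pauli_mult (w ! k) c, Suc k := b, k := w ! k] \<in> R"
    using update_mem[of _ k "w ! k"] length_mem[OF w] k c wk by simp
  moreover have "w[k := pauli_mult (w ! k) c, Suc k := b, k := w ! k] = w[Suc k := b]"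
    using length_mem[OF w] k by (intro nth_equalityI) (auto simp: nth_list_update)
  ultimately show ?thesis
    by simp
qed

lemma shift_mem:
  assumes w: "w \<in> R" and k: "Suc k < M" and wk: "w ! k \<noteq> P0" and "w ! Suc k = P0" and b: "b \<noteq> P0"
  shows "w[k := P0, Suc k := b] \<in> R"
proof -
  let ?w' = "w[Suc k := PX]"
  have "?w' \<in> R"
    using extend_mem assms by simp
  then have "?w'[k := P0, Suc k := PZ] \<in> R"
    using mult_adjacent_pair_mem[of ?w' k "w ! k" PY] adjacent_pair_mem[OF k wk] k length_mem[OF w]
    by simp
  then have "(?w'[k := P0, Suc k := PZ])[Suc k := b] \<in> R"
    by (rule update_mem) (use length_mem[OF w] k b in simp_all)
  then show ?thesis
    by (simp add: list_update_swap[of "Suc k" k])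
qed

(* Remove the last nonzero site n: if site n - 1 is nonzero, extending puts site n back;
   otherwise a placeholder X at n - 1 is shifted onto site n. *)
lemma last_site_mem:
  assumes len: "length w = M" and n: "n < M" "w ! n \<noteq> P0"
    and zero: "\<forall>i\<in>{Suc n..<M}. w ! i = P0"
    and shorter: "\<And>u. length u = M \<Longrightarrow> \<forall>i\<in>{n..<M}. u ! i = P0 \<Longrightarrow> \<exists>i<M. u ! i \<noteq> P0 \<Longrightarrow> u \<in> R"
  shows "w \<in> R"
proof -
  let ?u = "w[n := P0]"
  have u_zero: "\<forall>i\<in>{n..<M}. ?u ! i = P0"
    using len zero by (auto simp: nth_list_update)
  show ?thesis
  proof (cases "\<exists>i<M. ?u ! i \<noteq> P0")
    case False
    then have "w = single_site M n (w ! n)"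
      using len n by (intro nth_equalityI) (auto simp: nth_list_update split: if_splits)
    then show ?thesis
      using single_site_mem n by metis
  next
    case True
    then obtain j where j: "n = Suc j"
      using u_zero by (cases n) auto
    show ?thesis
    proof (cases "w ! j = P0")
      case False
      have "?u \<in> R"
        using shorter len u_zero True by simp
      then have "?u[n := w ! n] \<in> R"
        using extend_mem[of ?u j "w ! n"] len n False j by simp
      then show ?thesis
        by simp
    next
      case wj: True
      let ?u' = "?u[j := PX]"
      have "\<exists>i<M. ?u' ! i \<noteq> P0"
        using len n j by (intro exI[of _ j]) simp
      moreover have "\<forall>i\<in>{n..<M}. ?u' ! i = P0"
        using u_zero j by simp
      ultimately have "?u' \<in> R"
        using shorter[of ?u'] len by simp
      then have "?u'[j := P0, n := w ! n] \<in> R"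
        using shift_mem[of ?u' j "w ! n"] len n j by simp
      moreover have "?u'[j := P0, n := w ! n] = w"
        using wj j n len by (intro nth_equalityI) (auto simp: nth_list_update)
      ultimately show ?thesis
        by simp
    qed
  qed
qed

lemma supported_mem:
  "length w = M \<Longrightarrow> \<forall>i\<in>{n..<M}. w ! i = P0 \<Longrightarrow> \<exists>i<M. w ! i \<noteq> P0 \<Longrightarrow> w \<in> R"
proof (induction n arbitrary: w)
  case 0
  then show ?case by auto
next
  case (Suc n)
  show ?case
  proof (cases "n < M \<and> w ! n \<noteq> P0")
    case True
    then show ?thesis
      using last_site_mem Suc.IH Suc.prems by blast
  next
    case False
    then have "\<forall>i\<in>{n..<M}. w ! i = P0"
      using Suc.prems(2) by (auto simp: le_eq_less_or_eq Suc_le_eq)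
    then show ?thesis
      using Suc.IH Suc.prems by blast
  qed
qed

lemma nonzero_mem: "length w = M \<Longrightarrow> w \<noteq> replicate M P0 \<Longrightarrow> w \<in> R"
  by (rule supported_mem[of _ M]) (auto simp: list_eq_iff_nth_eq)

end

lemma sig_eq_pstr_single_site: "k < M \<Longrightarrow> sig M (Suc k) a = pstr (single_site M k a)"
  unfolding sig_def
  by (rule arg_cong[where f = pstr], rule nth_equalityI) (auto simp del: upt_Suc)

lemma sig_PX_mult_sig_PX:
  assumes "Suc k < M"
  shows "sig M (Suc k) PX * sig M (Suc (Suc k)) PX = pstr (adjacent_pair M k PX PX)"
proof -
  have "sig M (Suc k) PX * sig M (Suc (Suc k)) PX = pstr (single_site M k PX) * pstr (single_site M (Suc k) PX)"
    using assms by (simp add: sig_eq_pstr_single_site)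
  also have "\<dots> = pstr (adjacent_pair M k PX PX)"
    using assms by (simp add: pstr_mult pauli_str_mult_single_site pauli_str_phase_single_site adjacent_pair_def)
  finally show ?thesis .
qed

theorem lemma2:
  fixes N M :: nat and E \<omega> c d :: "nat \<Rightarrow> real"
    and g :: "nat \<Rightarrow> nat \<Rightarrow> pauli list \<Rightarrow> real" and hbar :: real
  assumes "N \<ge> 2" and "M \<ge> 1"
    and "(\<Sum>j\<in>{1..N}. E j) = 0"
  defines "L \<equiv> lie_gen ({\<i> \<cdot>\<^sub>m H0 N M E \<omega> c d g hbar}
                 \<union> {\<i> \<cdot>\<^sub>m kron (1\<^sub>m N) (sig M j PX) | j. j \<in> {1..M}}
                 \<union> {\<i> \<cdot>\<^sub>m kron (1\<^sub>m N) (sig M j PY) | j. j \<in> {1..M}})"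
  assumes "\<forall>j\<in>{1..M-1}. \<i> \<cdot>\<^sub>m kron (1\<^sub>m N) (sig M j PX * sig M (j+1) PX) \<in> L"
  shows "\<forall>as. length as = M \<and> as \<noteq> replicate M P0 \<longrightarrow> \<i> \<cdot>\<^sub>m kron (1\<^sub>m N) (pstr as) \<in> L"
proof -
  define R where "R = {w. length w = M \<and> \<i> \<cdot>\<^sub>m kron (1\<^sub>m N) (pstr w) \<in> L}"
  have generator: "\<i> \<cdot>\<^sub>m kron (1\<^sub>m N) (sig M (Suc k) a) \<in> L" if "k < M" "a \<in> {PX, PY}" for k a
    using that unfolding L_def by (intro lie_gen.gen) auto
  interpret anticommuting_closed M R
  proof
    show "pauli_str_mult w v \<in> R" if "w \<in> R" "v \<in> R" "Im (pauli_str_phase w v) \<noteq> 0" for w v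
      using that lie_gen_kron_pstr_anticommuting[of N w _ v] by (simp add: R_def L_def)
    show "adjacent_pair M k PX PX \<in> R" if "Suc k < M" for k
      using that assms(5) by (simp add: R_def sig_PX_mult_sig_PX[symmetric])
  qed (use generator in \<open>auto simp: R_def sig_eq_pstr_single_site\<close>)
  show ?thesis
    using nonzero_mem by (simp add: R_def)
qed

end
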